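(* Under the standing assumptions below, for every $k\ge 1$ let $$\widetilde{X'_k}(1)=-\sum_{j=1}^{k}a_jX_{k+1-j}$$ be the Wiener–Kolmogorov one-step predictor truncated to the $k$ observations $X_1,\dots,X_k$. Then for every $\delta>0$, $$\mathbb{E}\big[(X_{k+1}-\widetilde{X'_k}(1))^2\big]=\sigma_\varepsilon^2+O(k^{-1+\delta})\qquad (k\to\infty).$$
   Context: Standing assumptions. Let $(X_n)_{n\in\mathbb Z}$ be a real, zero-mean, weakly stationary process in $L^2$ with autocovariance function $\sigma(j)=\mathbb E[X_nX_{n+j}]$, satisfying $\sum_{j\in\mathbb Z}|\sigma(j)|=\infty$. Assume $X_n=\sum_{j\ge0}b_j\varepsilon_{n-j}$ (convergence in $L^2$). Here $(\varepsilon_n)_{n\in\mathbb Z}$ is a sequence of uncorrelated random variables with mean $0$ and variance $\sigma_\varepsilon^2>0$, and $b_0=1$, $\sum_j b_j^2<\infty$. Assume also $\varepsilon_n=\sum_{j\ge0}a_jX_{n-j}$ with $a_0=1$ and $\sum_j|a_j|<\infty$. The power series $A(z)=\sum_{j\ge0}a_jz^j$ and $B(z)=\sum_{j\ge0}b_jz^j$ satisfy $A(z)B(z)=1$ for $|z|\le1$. Fix $d\in(0,1/2)$. Assume that for every $\delta>0$ there exist constants $C_1,C_2$ (depending on $\delta$) such that $|a_j|\le C_1j^{-d-1+\delta}$ and $|b_j|\le C_2j^{d-1+\delta}$ for all $j\ge1$. *)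

theory Defs
  imports "HOL-Probability.Probability" "HOL-Library.Landau_Symbols"
begin

definition WK_trunc_pred :: "(nat \<Rightarrow> real) \<Rightarrow> (int \<Rightarrow> 'a \<Rightarrow> real) \<Rightarrow> nat \<Rightarrow> 'a \<Rightarrow> real" where
  "WK_trunc_pred a X k \<omega> = - (\<Sum>j = 1..k. a j * X (int k + 1 - int j) \<omega>)"

end

theory Submission
  imports Defs
begin

text \<open>
  Write e_k = X_{k+1} - (truncated predictor) = sum_{j<=k} a_j X_{k+1-j}.
  Inserting the MA(infinity) expansion of each X_{k+1-j} and collecting terms by innovation
  gives e_k = sum_m c_{k,m} eps_{k+1-m} with c_{k,m} = sum_{j<=min(k,m)} a_j b_{m-j}
  (defined below as err_coeff), so that E[e_k^2] = s2 * sum_m c_{k,m}^2 because the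
  innovations are uncorrelated.  Since A(z) B(z) = 1, the full convolution of a and b is the
  unit sequence; hence c_{k,0} = 1, c_{k,m} = 0 for 0 < m <= k, and for m > k the coefficient
  equals minus the tail sum_{k<j<=m} a_j b_{m-j}.  The power-law bounds on a and b make these
  tail coefficients small, and summing their squares over m > k gives a bound K k^(-1+delta).
\<close>

subsection \<open>Sums of powers j^(-r), compared with the antiderivative x^(1-r)/(1-r)\<close>

lemma powr_step_le_antiderivative:
  fixes x r :: real
  assumes "x \<ge> 1" "r > 0" "r \<noteq> 1"
  shows "(x + 1) powr (-r) \<le> ((x + 1) powr (1 - r) - x powr (1 - r)) / (1 - r)"
proof -
  have "\<exists>z. x < z \<and> z < x + 1 \<and>
      (x + 1) powr (1 - r) / (1 - r) - x powr (1 - r) / (1 - r) = (x + 1 - x) * z powr (-r)"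
  proof (rule MVT2)
    fix y assume "x \<le> y" "y \<le> x + 1"
    then have "y > 0" using assms by auto
    have "((\<lambda>y. y powr (1 - r) / (1 - r)) has_real_derivative (1 - r) * y powr (1 - r - 1) / (1 - r)) (at y)"
      using has_real_derivative_powr[OF \<open>y > 0\<close>] by (intro DERIV_cdivide) blast
    moreover have "(1 - r) * y powr (1 - r - 1) / (1 - r) = y powr (-r)" using assms by simp
    ultimately show "((\<lambda>y. y powr (1 - r) / (1 - r)) has_real_derivative y powr (-r)) (at y)" by simp
  qed auto
  then obtain z where z: "x < z" "z < x + 1"
    and mvt: "(x + 1) powr (1 - r) / (1 - r) - x powr (1 - r) / (1 - r) = z powr (-r)" by auto
  have "(x + 1) powr (-r) \<le> z powr (-r)" using z assms by (intro powr_mono2') auto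
  also have "\<dots> = ((x + 1) powr (1 - r) - x powr (1 - r)) / (1 - r)"
    using mvt by (simp add: diff_divide_distrib)
  finally show ?thesis .
qed

lemma sum_le_telescope:
  fixes f F :: "nat \<Rightarrow> real"
  assumes step: "\<And>j. k \<le> j \<Longrightarrow> f (Suc j) \<le> F (Suc j) - F j" and "k \<le> N"
  shows "(\<Sum>j\<in>{k<..N}. f j) \<le> F N - F k"
  using \<open>k \<le> N\<close>
proof (induction N)
  case (Suc N)
  show ?case
  proof (cases "k = Suc N")
    case False
    then have "k \<le> N" "{k<..Suc N} = insert (Suc N) {k<..N}" using Suc.prems by auto
    then show ?thesis using Suc.IH step[of N] by simp
  qed simp
qed simp

lemma tail_powr_sum_le:
  fixes r :: real
  assumes "r > 1" "k \<ge> 1"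
  shows "(\<Sum>j\<in>{k<..N}. real j powr (-r)) \<le> real k powr (1 - r) / (r - 1)"
proof (cases "k \<le> N")
  case True
  define F where "F j = real j powr (1 - r) / (1 - r)" for j
  have "(\<Sum>j\<in>{k<..N}. real j powr (-r)) \<le> F N - F k"
  proof (rule sum_le_telescope[OF _ True])
    fix j assume "k \<le> j"
    then show "real (Suc j) powr (-r) \<le> F (Suc j) - F j"
      using powr_step_le_antiderivative[of "real j" r] assms
      by (simp add: F_def add.commute diff_divide_distrib)
  qed
  moreover have "F N \<le> 0" using assms by (simp add: F_def divide_nonneg_neg)
  moreover have "- F k = real k powr (1 - r) / (r - 1)"
    using assms by (simp add: F_def divide_simps algebra_simps)
  ultimately show ?thesis by linarith
qed (use assms in simp)

lemma head_powr_sum_le: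
  fixes r :: real
  assumes "0 < r" "r < 1"
  shows "(\<Sum>j\<in>{1..n}. real j powr (-r)) \<le> real n powr (1 - r) / (1 - r)"
proof (cases "n = 0")
  case False
  define F where "F j = real j powr (1 - r) / (1 - r)" for j
  have "{1..n} = insert 1 {1<..n}" using False by auto
  then have split: "(\<Sum>j\<in>{1..n}. real j powr (-r)) = 1 + (\<Sum>j\<in>{1<..n}. real j powr (-r))" by simp
  have "(\<Sum>j\<in>{1<..n}. real j powr (-r)) \<le> F n - F 1"
  proof (rule sum_le_telescope)
    fix j :: nat assume "1 \<le> j"
    then show "real (Suc j) powr (-r) \<le> F (Suc j) - F j"
      using powr_step_le_antiderivative[of "real j" r] assms
      by (simp add: F_def add.commute diff_divide_distrib)
  qed (use False in simp)
  moreover have "1 \<le> F 1" using assms by (simp add: F_def)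
  ultimately show ?thesis unfolding split F_def by linarith
qed simp

subsection \<open>The convolution identity from A(z) B(z) = 1\<close>

lemma powser_zero_on_disc_imp_zero:
  fixes c :: "nat \<Rightarrow> complex"
  assumes S: "\<And>z. norm z < 1 \<Longrightarrow> (\<lambda>n. c n * z ^ n) sums 0"
  shows "c n = 0"
proof (induction n rule: less_induct)
  case (less n)
  have shifted: "(\<lambda>i. c (i + n) * z ^ i) sums 0" if z: "z \<noteq> 0" "norm z < 1" for z
  proof -
    have "(\<Sum>i<n. c i * z ^ i) = 0" using less by simp
    then have "(\<lambda>i. c (i + n) * z ^ (i + n)) sums 0"
      using S[OF z(2)] sums_iff_shift[of "\<lambda>i. c i * z ^ i" n 0] by simp
    then have "(\<lambda>i. c (i + n) * z ^ (i + n) * inverse (z ^ n)) sums (0 * inverse (z ^ n))"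
      by (rule sums_mult2)
    moreover have "c (i + n) * z ^ (i + n) * inverse (z ^ n) = c (i + n) * z ^ i" for i
      using z by (simp add: power_add)
    ultimately show ?thesis by simp
  qed
  have "((\<lambda>_. 0::complex) \<longlongrightarrow> (\<lambda>i. c (i + n)) 0) (at (0::complex))"
    by (rule powser_limit_0_strong[where f = "\<lambda>_. 0" and s = 1]) (simp_all add: shifted)
  then show ?case using tendsto_const tendsto_unique[OF at_neq_bot] by (metis add_0)
qed

lemma summable_powser_of_square_summable:
  fixes b :: "nat \<Rightarrow> real" and z :: complex
  assumes b_sq: "summable (\<lambda>j. (b j)\<^sup>2)" and z: "norm z < 1"
  shows "summable (\<lambda>j. norm (complex_of_real (b j) * z ^ j))"
proof (rule summable_comparison_test)
  have "(\<lambda>j. (b j)\<^sup>2) \<longlonglongrightarrow> 0" by (rule summable_LIMSEQ_zero[OF b_sq])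
  then have "eventually (\<lambda>j. (b j)\<^sup>2 < 1) sequentially" by (rule order_tendstoD) simp
  then obtain N where "\<And>j. j \<ge> N \<Longrightarrow> (b j)\<^sup>2 < 1" by (auto simp: eventually_sequentially)
  then have "\<bar>b j\<bar> \<le> 1" if "j \<ge> N" for j
    using that abs_le_square_iff[of "b j" 1] by fastforce
  then show "\<exists>N. \<forall>j\<ge>N. norm (norm (complex_of_real (b j) * z ^ j)) \<le> norm z ^ j"
    by (auto simp: norm_mult norm_power intro!: exI[of _ N] mult_left_le_one_le)
  show "summable (\<lambda>j. norm z ^ j)" using z by simp
qed

lemma convolution_powser_sums_one:
  fixes a b :: "nat \<Rightarrow> real" and z :: complex
  assumes b_sq: "summable (\<lambda>j. (b j)\<^sup>2)"
    and a_abs: "summable (\<lambda>j. \<bar>a j\<bar>)"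
    and AB: "\<And>z::complex. norm z \<le> 1 \<Longrightarrow> summable (\<lambda>j. complex_of_real (b j) * z ^ j) \<Longrightarrow>
               (\<Sum>j. complex_of_real (a j) * z ^ j) * (\<Sum>j. complex_of_real (b j) * z ^ j) = 1"
    and z: "norm z < 1"
  shows "(\<lambda>k. complex_of_real (\<Sum>i\<le>k. a i * b (k - i)) * z ^ k) sums 1"
proof -
  have na: "summable (\<lambda>k. norm (complex_of_real (a k) * z ^ k))"
    by (rule summable_comparison_test[OF _ a_abs])
      (use z in \<open>auto simp: norm_mult norm_power intro!: mult_left_le power_le_one\<close>)
  have nb: "summable (\<lambda>k. norm (complex_of_real (b k) * z ^ k))"
    by (rule summable_powser_of_square_summable[OF b_sq z])
  have prod_one: "(\<Sum>k. complex_of_real (a k) * z ^ k) * (\<Sum>k. complex_of_real (b k) * z ^ k) = 1"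
    using z by (intro AB summable_norm_cancel[OF nb]) auto
  have coeff: "(\<lambda>k. \<Sum>i\<le>k. (complex_of_real (a i) * z ^ i) * (complex_of_real (b (k - i)) * z ^ (k - i)))
             = (\<lambda>k. complex_of_real (\<Sum>i\<le>k. a i * b (k - i)) * z ^ k)"
  proof
    fix k
    show "(\<Sum>i\<le>k. (complex_of_real (a i) * z ^ i) * (complex_of_real (b (k - i)) * z ^ (k - i)))
        = complex_of_real (\<Sum>i\<le>k. a i * b (k - i)) * z ^ k"
      unfolding of_real_sum sum_distrib_right
      by (intro sum.cong refl) (simp add: power_add[symmetric])
  qed
  show ?thesis
    using Cauchy_product_sums[OF na nb] unfolding coeff prod_one .
qed

lemma convolution_of_reciprocal_series:
  fixes a b :: "nat \<Rightarrow> real"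
  assumes b_sq: "summable (\<lambda>j. (b j)\<^sup>2)"
    and a_abs: "summable (\<lambda>j. \<bar>a j\<bar>)"
    and AB: "\<And>z::complex. norm z \<le> 1 \<Longrightarrow> summable (\<lambda>j. complex_of_real (b j) * z ^ j) \<Longrightarrow>
               (\<Sum>j. complex_of_real (a j) * z ^ j) * (\<Sum>j. complex_of_real (b j) * z ^ j) = 1"
  shows "(\<Sum>i\<le>m. a i * b (m - i)) = (if m = 0 then 1 else 0)"
proof -
  define cv where "cv m = (\<Sum>i\<le>m. a i * b (m - i))" for m
  have unit: "(\<lambda>k. (if k = 0 then 1 else 0) * z ^ k) sums (1::complex)" for z :: complex
  proof -
    have "(\<lambda>k. (if k = 0 then 1 else 0) * z ^ k) = (\<lambda>k. if k = 0 then (1::complex) else 0)"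
      by auto
    then show ?thesis using sums_single[of 0 "\<lambda>_. 1::complex"] by simp
  qed
  have "(\<lambda>k. complex_of_real (cv k) * z ^ k - (if k = 0 then 1 else 0) * z ^ k) sums (1 - 1)"
    if "norm z < 1" for z :: complex
    unfolding cv_def by (rule sums_diff[OF convolution_powser_sums_one[OF b_sq a_abs AB that] unit])
  then have "(\<lambda>k. (complex_of_real (cv k) - (if k = 0 then 1 else 0)) * z ^ k) sums 0"
    if "norm z < 1" for z :: complex
    using that by (simp add: left_diff_distrib)
  then have "complex_of_real (cv m) - (if m = 0 then 1 else 0) = 0"
    by (rule powser_zero_on_disc_imp_zero)
  then have "complex_of_real (cv m) = complex_of_real (if m = 0 then 1 else 0)" by simp
  then show ?thesis unfolding cv_def of_real_eq_iff .
qed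

subsection \<open>The coefficients of the prediction error\<close>

text \<open>err_coeff a b k m is the coefficient of eps_{k+1-m} in the error of the truncated predictor.\<close>

definition err_coeff :: "(nat \<Rightarrow> real) \<Rightarrow> (nat \<Rightarrow> real) \<Rightarrow> nat \<Rightarrow> nat \<Rightarrow> real" where
  "err_coeff a b k m = (\<Sum>j\<le>k. if j \<le> m then a j * b (m - j) else 0)"

text \<open>For m <= k the coefficient is a full convolution, hence 1 for m = 0 and 0 otherwise.\<close>
lemma err_coeff_low:
  assumes conv: "\<And>m. (\<Sum>i\<le>m. a i * b (m - i)) = (if m = 0 then 1 else 0)" and "m \<le> k"
  shows "err_coeff a b k m = (if m = 0 then 1 else 0)"
proof -
  have "err_coeff a b k m = (\<Sum>j\<in>{j\<in>{..k}. j \<le> m}. a j * b (m - j))"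
    unfolding err_coeff_def by (rule sum.inter_filter[symmetric]) simp
  also have "{j\<in>{..k}. j \<le> m} = {..m}" using \<open>m \<le> k\<close> by auto
  finally show ?thesis using conv[of m] by simp
qed

text \<open>For m > k the full convolution vanishes, so the coefficient is minus its tail.\<close>
lemma err_coeff_high:
  assumes conv: "\<And>m. (\<Sum>i\<le>m. a i * b (m - i)) = (if m = 0 then 1 else 0)" and "k < m"
  shows "err_coeff a b k m = - (\<Sum>j\<in>{k<..m}. a j * b (m - j))"
proof -
  have "err_coeff a b k m = (\<Sum>j\<le>k. a j * b (m - j))"
    unfolding err_coeff_def using \<open>k < m\<close> by (intro sum.cong) auto
  moreover have "(\<Sum>i\<le>m. a i * b (m - i)) = (\<Sum>j\<le>k. a j * b (m - j)) + (\<Sum>j\<in>{k<..m}. a j * b (m - j))"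
  proof -
    have "{..m} = {..k} \<union> {k<..m}" using \<open>k < m\<close> by auto
    then show ?thesis by (simp only:) (rule sum.union_disjoint, auto)
  qed
  ultimately show ?thesis using conv[of m] \<open>k < m\<close> by simp
qed

text \<open>Tail estimates under power-law bounds |a_j| <= A j^(-p), |b_j| <= B j^(-q) with
  p > 1 and 0 < q < 1 (in the application p = 1 + d - eta and q = 1 - d - eta).\<close>

context
  fixes a b :: "nat \<Rightarrow> real" and A B p q :: real
  assumes conv: "\<And>m. (\<Sum>i\<le>m. a i * b (m - i)) = (if m = 0 then 1 else 0)"
    and b0: "b 0 = 1"
    and a_bound: "\<And>j. j \<ge> 1 \<Longrightarrow> \<bar>a j\<bar> \<le> A * real j powr (-p)"
    and b_bound: "\<And>j. j \<ge> 1 \<Longrightarrow> \<bar>b j\<bar> \<le> B * real j powr (-q)"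
    and p_gt_1: "p > 1" and q_pos: "0 < q" and q_lt_1: "q < 1"
begin

lemma coeff_bound_constants_nonneg: "A \<ge> 0" "B \<ge> 0"
  using a_bound[of 1] b_bound[of 1] by (auto intro: order_trans[OF abs_ge_zero])

lemma b_abs_partial_sum_le:
  assumes "m \<ge> 1"
  shows "(\<Sum>i<m. \<bar>b i\<bar>) \<le> (1 + B / (1 - q)) * real m powr (1 - q)"
proof -
  have "{..<m} = insert 0 {1..<m}" using assms by auto
  then have "(\<Sum>i<m. \<bar>b i\<bar>) = 1 + (\<Sum>i\<in>{1..<m}. \<bar>b i\<bar>)" using b0 by simp
  also have "\<dots> \<le> 1 + (\<Sum>i\<in>{1..m}. B * real i powr (-q))"
    by (rule add_left_mono, rule order_trans[OF sum_mono sum_mono2])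
      (use b_bound coeff_bound_constants_nonneg in auto)
  also have "\<dots> \<le> 1 + B * (real m powr (1 - q) / (1 - q))"
    unfolding sum_distrib_left[symmetric] using head_powr_sum_le[of q m] q_pos q_lt_1
    by (intro add_left_mono mult_left_mono coeff_bound_constants_nonneg)
  also have "\<dots> \<le> (1 + B / (1 - q)) * real m powr (1 - q)"
    using ge_one_powr_ge_zero[of "real m" "1 - q"] assms q_lt_1 by (simp add: algebra_simps)
  finally show ?thesis .
qed

lemma a_abs_tail_sum_le:
  assumes "k \<ge> 1"
  shows "(\<Sum>j\<in>{k<..m}. \<bar>a j\<bar>) \<le> A / (p - 1) * real k powr (1 - p)"
proof -
  have "(\<Sum>j\<in>{k<..m}. \<bar>a j\<bar>) \<le> (\<Sum>j\<in>{k<..m}. A * real j powr (-p))"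
    by (rule sum_mono) (use a_bound assms in auto)
  also have "\<dots> \<le> A * (real k powr (1 - p) / (p - 1))"
    unfolding sum_distrib_left[symmetric] using tail_powr_sum_le[of p k m] p_gt_1 assms
    by (intro mult_left_mono coeff_bound_constants_nonneg) auto
  finally show ?thesis by simp
qed

text \<open>In a term a_j b_{m-j} of the tail convolution one of the two indices is at least m/2,
  so one factor can be bounded by its power law at m/2.\<close>
lemma split_product_bound:
  assumes "k < j" "j \<le> m"
  shows "\<bar>a j\<bar> * \<bar>b (m - j)\<bar> \<le>
    A * 2 powr p * real m powr (-p) * \<bar>b (m - j)\<bar> + B * 2 powr q * real m powr (-q) * \<bar>a j\<bar>"
proof -
  have m: "real m > 0" using assms by simp
  have half: "(real m / 2) powr (-r) = 2 powr r * real m powr (-r)" for r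
    using m by (simp add: powr_divide powr_minus divide_simps)
  note nonneg = coeff_bound_constants_nonneg
  show ?thesis
  proof (cases "2 * j \<ge> m")
    case True
    have "\<bar>a j\<bar> \<le> A * real j powr (-p)" using a_bound assms by simp
    also have "\<dots> \<le> A * (real m / 2) powr (-p)"
      using True m p_gt_1 nonneg by (intro mult_left_mono powr_mono2') auto
    finally have "\<bar>a j\<bar> * \<bar>b (m - j)\<bar> \<le> A * 2 powr p * real m powr (-p) * \<bar>b (m - j)\<bar>"
      by (intro mult_right_mono) (auto simp: half mult.assoc)
    moreover have "0 \<le> B * 2 powr q * real m powr (-q) * \<bar>a j\<bar>" using nonneg by simp
    ultimately show ?thesis by linarith
  next
    case False
    have "m - j \<ge> 1" using False by simp
    then have "\<bar>b (m - j)\<bar> \<le> B * real (m - j) powr (-q)" by (rule b_bound)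
    also have "\<dots> \<le> B * (real m / 2) powr (-q)"
      using False m q_pos nonneg by (intro mult_left_mono powr_mono2') auto
    finally have "\<bar>a j\<bar> * \<bar>b (m - j)\<bar> \<le> B * 2 powr q * real m powr (-q) * \<bar>a j\<bar>"
      by (subst mult.commute, intro mult_right_mono) (auto simp: half mult.assoc)
    moreover have "0 \<le> A * 2 powr p * real m powr (-p) * \<bar>b (m - j)\<bar>" using nonneg by simp
    ultimately show ?thesis by linarith
  qed
qed

lemma err_coeff_high_bound:
  assumes "k \<ge> 1" "k < m"
  shows "\<bar>err_coeff a b k m\<bar> \<le> A * 2 powr p * (1 + B / (1 - q)) * real m powr (1 - p - q)
           + A * B * 2 powr q / (p - 1) * real m powr (-q) * real k powr (1 - p)"
proof -
  have b_refl: "(\<Sum>j\<in>{k<..m}. \<bar>b (m - j)\<bar>) \<le> (1 + B / (1 - q)) * real m powr (1 - q)"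
  proof -
    have "(\<Sum>j\<in>{k<..m}. \<bar>b (m - j)\<bar>) = (\<Sum>i\<in>(\<lambda>j. m - j) ` {k<..m}. \<bar>b i\<bar>)"
      by (subst sum.reindex) (auto simp: inj_on_def)
    also have "\<dots> \<le> (\<Sum>i<m. \<bar>b i\<bar>)" by (rule sum_mono2) auto
    finally show ?thesis using b_abs_partial_sum_le[of m] assms by simp
  qed
  have "\<bar>err_coeff a b k m\<bar> \<le> (\<Sum>j\<in>{k<..m}. \<bar>a j\<bar> * \<bar>b (m - j)\<bar>)"
    unfolding err_coeff_high[OF conv \<open>k < m\<close>] abs_minus_cancel
    by (rule order_trans[OF sum_abs]) (simp add: abs_mult)
  also have "\<dots> \<le> (\<Sum>j\<in>{k<..m}. A * 2 powr p * real m powr (-p) * \<bar>b (m - j)\<bar>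
                                   + B * 2 powr q * real m powr (-q) * \<bar>a j\<bar>)"
    by (intro sum_mono split_product_bound) auto
  also have "\<dots> = A * 2 powr p * real m powr (-p) * (\<Sum>j\<in>{k<..m}. \<bar>b (m - j)\<bar>)
                 + B * 2 powr q * real m powr (-q) * (\<Sum>j\<in>{k<..m}. \<bar>a j\<bar>)"
    by (simp add: sum.distrib sum_distrib_left)
  also have "\<dots> \<le> A * 2 powr p * real m powr (-p) * ((1 + B / (1 - q)) * real m powr (1 - q))
                 + B * 2 powr q * real m powr (-q) * (A / (p - 1) * real k powr (1 - p))"
    using b_refl a_abs_tail_sum_le[OF \<open>k \<ge> 1\<close>] coeff_bound_constants_nonneg
    by (intro add_mono mult_left_mono) auto
  also have "\<dots> = A * 2 powr p * (1 + B / (1 - q)) * real m powr (1 - p - q)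
                 + A * B * 2 powr q / (p - 1) * real m powr (-q) * real k powr (1 - p)"
  proof -
    have e: "real m powr (-p) * real m powr (1 - q) = real m powr (1 - p - q)"
      by (simp add: powr_add[symmetric] algebra_simps)
    show ?thesis unfolding e[symmetric] by (simp add: field_simps)
  qed
  finally show ?thesis .
qed

lemma err_coeff_high_square_bound:
  assumes "k \<ge> 1" "k < m"
  defines "K1 \<equiv> A * 2 powr p * (1 + B / (1 - q))" and "K2 \<equiv> A * B * 2 powr q / (p - 1)"
  shows "(err_coeff a b k m)\<^sup>2 \<le> 2 * K1\<^sup>2 * real m powr (-(2*p + 2*q - 2))
           + 2 * K2\<^sup>2 * real k powr (2 - 2*p) * real m powr (-(2*q))"
proof -
  define x where "x = K1 * real m powr (1 - p - q)"
  define y where "y = K2 * real m powr (-q) * real k powr (1 - p)"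
  have "\<bar>err_coeff a b k m\<bar> \<le> x + y"
    using err_coeff_high_bound[OF assms(1,2)] unfolding x_def y_def K1_def K2_def by simp
  then have "(err_coeff a b k m)\<^sup>2 \<le> (x + y)\<^sup>2"
    using power_mono[of "\<bar>err_coeff a b k m\<bar>" "x + y" 2] by simp
  also have "\<dots> \<le> 2 * x\<^sup>2 + 2 * y\<^sup>2"
    using zero_le_power2[of "x - y"] by (simp add: power2_eq_square algebra_simps)
  also have "\<dots> = 2 * K1\<^sup>2 * real m powr (-(2*p + 2*q - 2))
                   + 2 * K2\<^sup>2 * real k powr (2 - 2*p) * real m powr (-(2*q))"
    using assms(1,2) by (simp add: x_def y_def power_mult_distrib powr_power algebra_simps)
  finally show ?thesis .
qed

lemma err_coeff_tail_energy:
  assumes q_gt_half: "1/2 < q" and pq: "p + q > 3/2"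
  shows "\<exists>K\<ge>0. \<forall>k\<ge>1. \<forall>N.
           (\<Sum>m\<in>{k<..<N}. (err_coeff a b k m)\<^sup>2) \<le> K * real k powr (3 - 2*p - 2*q)"
proof -
  define K1 where "K1 = A * 2 powr p * (1 + B / (1 - q))"
  define K2 where "K2 = A * B * 2 powr q / (p - 1)"
  define K where "K = 2 * K1\<^sup>2 / (2*p + 2*q - 3) + 2 * K2\<^sup>2 / (2*q - 1)"
  have "(\<Sum>m\<in>{k<..<N}. (err_coeff a b k m)\<^sup>2) \<le> K * real k powr (3 - 2*p - 2*q)"
    if k: "k \<ge> 1" for k N
  proof -
    have sub: "{k<..<N} \<subseteq> {k<..N}" by auto
    have "(\<Sum>m\<in>{k<..<N}. (err_coeff a b k m)\<^sup>2)
        \<le> (\<Sum>m\<in>{k<..<N}. 2 * K1\<^sup>2 * real m powr (-(2*p + 2*q - 2))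
                       + 2 * K2\<^sup>2 * real k powr (2 - 2*p) * real m powr (-(2*q)))"
      unfolding K1_def K2_def by (intro sum_mono err_coeff_high_square_bound k) simp
    also have "\<dots> = 2 * K1\<^sup>2 * (\<Sum>m\<in>{k<..<N}. real m powr (-(2*p + 2*q - 2)))
          + 2 * K2\<^sup>2 * real k powr (2 - 2*p) * (\<Sum>m\<in>{k<..<N}. real m powr (-(2*q)))"
      by (simp add: sum.distrib sum_distrib_left)
    also have "\<dots> \<le> 2 * K1\<^sup>2 * (real k powr (1 - (2*p + 2*q - 2)) / (2*p + 2*q - 2 - 1))
          + 2 * K2\<^sup>2 * real k powr (2 - 2*p) * (real k powr (1 - 2*q) / (2*q - 1))"
    proof (intro add_mono mult_left_mono)
      show "(\<Sum>m\<in>{k<..<N}. real m powr (-(2*p + 2*q - 2)))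
            \<le> real k powr (1 - (2*p + 2*q - 2)) / (2*p + 2*q - 2 - 1)"
        by (rule order_trans[OF sum_mono2[OF _ sub] tail_powr_sum_le]) (use pq k in auto)
      show "(\<Sum>m\<in>{k<..<N}. real m powr (-(2*q))) \<le> real k powr (1 - 2*q) / (2*q - 1)"
        by (rule order_trans[OF sum_mono2[OF _ sub] tail_powr_sum_le]) (use q_gt_half k in auto)
    qed auto
    also have "\<dots> = K * real k powr (3 - 2*p - 2*q)"
    proof -
      have "real k powr (2 - 2*p) * real k powr (1 - 2*q) = real k powr (3 - 2*p - 2*q)"
        by (simp add: powr_add[symmetric] algebra_simps)
      moreover have "1 - (2*p + 2*q - 2) = 3 - 2*p - 2*q" "2*p + 2*q - 2 - 1 = 2*p + 2*q - 3" by simp_all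
      ultimately show ?thesis unfolding K_def by (simp add: field_simps)
    qed
    finally show ?thesis .
  qed
  moreover have "K \<ge> 0" using q_gt_half pq unfolding K_def by simp
  ultimately show ?thesis by blast
qed

end

text \<open>The rate for the theorem: given delta, choose eta small enough that p = 1 + d - eta
  and q = 1 - d - eta satisfy the hypotheses above and 3 - 2p - 2q = -1 + 4 eta <= -1 + delta.\<close>
lemma err_coeff_tail_energy_rate:
  fixes a b :: "nat \<Rightarrow> real" and d \<delta> :: real
  assumes conv: "\<And>m. (\<Sum>i\<le>m. a i * b (m - i)) = (if m = 0 then 1 else 0)"
    and b0: "b 0 = 1" and d_pos: "0 < d" and d_lt: "d < 1/2"
    and coeff_bounds: "\<And>\<delta>. \<delta> > 0 \<Longrightarrow> \<exists>C1 C2. \<forall>j\<ge>1.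
           \<bar>a j\<bar> \<le> C1 * real j powr (- d - 1 + \<delta>) \<and> \<bar>b j\<bar> \<le> C2 * real j powr (d - 1 + \<delta>)"
    and \<delta>: "\<delta> > 0"
  shows "\<exists>K\<ge>0. \<forall>k\<ge>1. \<forall>N. (\<Sum>m\<in>{k<..<N}. (err_coeff a b k m)\<^sup>2) \<le> K * real k powr (-1 + \<delta>)"
proof -
  define \<eta> where "\<eta> = min (\<delta>/4) (min (d/2) ((1/2 - d)/2))"
  have \<eta>: "0 < \<eta>" "\<eta> \<le> \<delta>/4" "\<eta> < d" "\<eta> < 1/2 - d"
    using \<delta> d_pos d_lt unfolding \<eta>_def min_def by auto
  obtain C1 C2 where C: "\<forall>j\<ge>1. \<bar>a j\<bar> \<le> C1 * real j powr (- d - 1 + \<eta>) \<and> \<bar>b j\<bar> \<le> C2 * real j powr (d - 1 + \<eta>)"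
    using coeff_bounds[OF \<eta>(1)] by blast
  define p q where "p = d + 1 - \<eta>" and "q = 1 - d - \<eta>"
  have "\<exists>K\<ge>0. \<forall>k\<ge>1. \<forall>N. (\<Sum>m\<in>{k<..<N}. (err_coeff a b k m)\<^sup>2) \<le> K * real k powr (3 - 2*p - 2*q)"
    by (rule err_coeff_tail_energy[where A = C1 and B = C2])
      (use conv b0 C \<eta> d_pos d_lt in \<open>auto simp: p_def q_def algebra_simps\<close>)
  then obtain K where K: "K \<ge> 0"
    "\<And>k N. k \<ge> 1 \<Longrightarrow> (\<Sum>m\<in>{k<..<N}. (err_coeff a b k m)\<^sup>2) \<le> K * real k powr (3 - 2*p - 2*q)"
    by blast
  have "real k powr (3 - 2*p - 2*q) \<le> real k powr (-1 + \<delta>)" if "k \<ge> 1" for k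
    using that \<eta> by (intro powr_mono) (auto simp: p_def q_def)
  then show ?thesis using K by (meson mult_left_mono order_trans)
qed

subsection \<open>Square integrable random variables\<close>

definition square_integrable :: "'a measure \<Rightarrow> ('a \<Rightarrow> real) \<Rightarrow> bool" where
  "square_integrable M f \<longleftrightarrow> f \<in> borel_measurable M \<and> integrable M (\<lambda>x. (f x)\<^sup>2)"

text \<open>Integrability of products, from |f g| <= (f^2 + g^2)/2.\<close>
lemma square_integrable_mult_integrable:
  assumes "square_integrable M f" "square_integrable M g"
  shows "integrable M (\<lambda>x. f x * g x)"
proof (rule Bochner_Integration.integrable_bound[where f = "\<lambda>x. (f x)\<^sup>2 + (g x)\<^sup>2"])
  show "AE x in M. norm (f x * g x) \<le> norm ((f x)\<^sup>2 + (g x)\<^sup>2)"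
  proof (intro AE_I2)
    fix x
    have "2 * \<bar>f x * g x\<bar> \<le> (f x)\<^sup>2 + (g x)\<^sup>2"
      using zero_le_power2[of "\<bar>f x\<bar> - \<bar>g x\<bar>"] by (simp add: power2_eq_square algebra_simps abs_mult)
    then show "norm (f x * g x) \<le> norm ((f x)\<^sup>2 + (g x)\<^sup>2)" by simp
  qed
qed (use assms in \<open>auto simp: square_integrable_def\<close>)

lemma square_integrable_add:
  assumes f: "square_integrable M f" and g: "square_integrable M g"
  shows "square_integrable M (\<lambda>x. f x + g x)"
proof -
  have "(\<lambda>x. (f x + g x)\<^sup>2) = (\<lambda>x. (f x)\<^sup>2 + 2 * (f x * g x) + (g x)\<^sup>2)"
    by (simp add: power2_sum algebra_simps)
  then show ?thesis
    using f g square_integrable_mult_integrable[OF f g] unfolding square_integrable_def by auto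
qed

lemma square_integrable_cmult: "square_integrable M f \<Longrightarrow> square_integrable M (\<lambda>x. c * f x)"
  unfolding square_integrable_def by (auto simp: power_mult_distrib)

lemma square_integrable_diff:
  "square_integrable M f \<Longrightarrow> square_integrable M g \<Longrightarrow> square_integrable M (\<lambda>x. f x - g x)"
  using square_integrable_add[of M f "\<lambda>x. (-1) * g x"] square_integrable_cmult[of M g "-1"] by simp

lemma square_integrable_sum:
  "finite S \<Longrightarrow> (\<And>i. i \<in> S \<Longrightarrow> square_integrable M (f i)) \<Longrightarrow>
     square_integrable M (\<lambda>x. \<Sum>i\<in>S. f i x)"
proof (induction S rule: finite_induct)
  case empty then show ?case by (simp add: square_integrable_def)
next
  case (insert i S)
  then show ?case using square_integrable_add[of M "f i" "\<lambda>x. \<Sum>i\<in>S. f i x"] by simp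
qed

text \<open>Cauchy--Schwarz for real integrals, via nonnegativity of the quadratic
  polynomial in t given by the integral of (u - t v)^2.\<close>
lemma integral_Cauchy_Schwarz:
  assumes u: "square_integrable M u" and v: "square_integrable M v"
  shows "(\<integral>x. u x * v x \<partial>M)\<^sup>2 \<le> (\<integral>x. (u x)\<^sup>2 \<partial>M) * (\<integral>x. (v x)\<^sup>2 \<partial>M)"
proof -
  define U V P where "U = (\<integral>x. (u x)\<^sup>2 \<partial>M)" and "V = (\<integral>x. (v x)\<^sup>2 \<partial>M)"
    and "P = (\<integral>x. u x * v x \<partial>M)"
  have quad: "0 \<le> U - 2 * t * P + t\<^sup>2 * V" for t
  proof -
    have "0 \<le> (\<integral>x. (u x - t * v x)\<^sup>2 \<partial>M)" by (rule Bochner_Integration.integral_nonneg) simp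
    also have "(\<lambda>x. (u x - t * v x)\<^sup>2) = (\<lambda>x. (u x)\<^sup>2 - 2 * t * (u x * v x) + t\<^sup>2 * (v x)\<^sup>2)"
      by (simp add: power2_eq_square algebra_simps)
    also have "(\<integral>x. (u x)\<^sup>2 - 2 * t * (u x * v x) + t\<^sup>2 * (v x)\<^sup>2 \<partial>M) = U - 2 * t * P + t\<^sup>2 * V"
      using u v square_integrable_mult_integrable[OF u v]
      by (simp add: U_def V_def P_def square_integrable_def)
    finally show ?thesis .
  qed
  have V_nonneg: "V \<ge> 0" unfolding V_def by (rule Bochner_Integration.integral_nonneg) simp
  show ?thesis
  proof (cases "V = 0")
    case True
    have "P = 0"
    proof (rule ccontr)
      assume "P \<noteq> 0"
      then have "2 * ((U + 1) / (2 * P)) * P = U + 1" by simp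
      then show False using quad[of "(U + 1) / (2 * P)"] True by simp
    qed
    then show ?thesis by (simp add: P_def)
  next
    case False
    then have V_pos: "V > 0" using V_nonneg by simp
    have "2 * (P / V) * P = 2 * (P\<^sup>2 / V)" "(P / V)\<^sup>2 * V = P\<^sup>2 / V"
      using V_pos by (simp_all add: power2_eq_square)
    then have "P\<^sup>2 / V \<le> U" using quad[of "P / V"] by linarith
    then show ?thesis using V_pos by (simp add: U_def V_def P_def divide_le_eq)
  qed
qed

lemma mean_square_limit_imp_second_moment_limit:
  fixes f :: "nat \<Rightarrow> 'a \<Rightarrow> real"
  assumes f: "\<And>N. square_integrable M (f N)" and g: "square_integrable M g"
    and lim: "(\<lambda>N. \<integral>x. (f N x - g x)\<^sup>2 \<partial>M) \<longlonglongrightarrow> 0"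
  shows "(\<lambda>N. \<integral>x. (f N x)\<^sup>2 \<partial>M) \<longlonglongrightarrow> (\<integral>x. (g x)\<^sup>2 \<partial>M)"
proof -
  define w where "w N = (\<integral>x. (f N x - g x)\<^sup>2 \<partial>M)" for N
  define G where "G = (\<integral>x. (g x)\<^sup>2 \<partial>M)"
  have bound: "\<bar>(\<integral>x. (f N x)\<^sup>2 \<partial>M) - G\<bar> \<le> w N + 2 * sqrt (w N * G)" for N
  proof -
    have d: "square_integrable M (\<lambda>x. f N x - g x)" by (rule square_integrable_diff[OF f g])
    define I where "I = (\<integral>x. (f N x - g x) * g x \<partial>M)"
    have "(\<lambda>x. (f N x)\<^sup>2) = (\<lambda>x. (f N x - g x)\<^sup>2 + 2 * ((f N x - g x) * g x) + (g x)\<^sup>2)"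
      by (simp add: power2_eq_square algebra_simps)
    then have "(\<integral>x. (f N x)\<^sup>2 \<partial>M) - G = w N + 2 * I"
      using d g square_integrable_mult_integrable[OF d g]
      by (simp add: w_def G_def I_def square_integrable_def)
    moreover have "\<bar>I\<bar> \<le> sqrt (w N * G)"
      using real_sqrt_le_mono[OF integral_Cauchy_Schwarz[OF d g]]
      by (simp add: w_def G_def I_def)
    moreover have "\<bar>w N\<bar> = w N" unfolding w_def by (simp add: Bochner_Integration.integral_nonneg)
    moreover have "\<bar>w N + 2 * I\<bar> \<le> \<bar>w N\<bar> + 2 * \<bar>I\<bar>" using abs_triangle_ineq[of "w N" "2 * I"] by simp
    ultimately show ?thesis by linarith
  qed
  have "w \<longlonglongrightarrow> 0" using lim unfolding w_def .
  then have "(\<lambda>N. w N + 2 * sqrt (w N * G)) \<longlonglongrightarrow> 0 + 2 * sqrt (0 * G)"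
    by (intro tendsto_add tendsto_mult tendsto_real_sqrt tendsto_const)
  then have majorant: "(\<lambda>N. w N + 2 * sqrt (w N * G)) \<longlonglongrightarrow> 0" by simp
  have "eventually (\<lambda>N. norm ((\<integral>x. (f N x)\<^sup>2 \<partial>M) - G) \<le> w N + 2 * sqrt (w N * G)) sequentially"
    using bound by (intro always_eventually) simp
  then have "(\<lambda>N. (\<integral>x. (f N x)\<^sup>2 \<partial>M) - G) \<longlonglongrightarrow> 0"
    using majorant by (rule Lim_null_comparison)
  then show ?thesis unfolding G_def by (rule LIM_zero_cancel)
qed

lemma integral_square_orthogonal_sum:
  fixes e :: "nat \<Rightarrow> 'a \<Rightarrow> real"
  assumes e: "\<And>i. square_integrable M (e i)"
    and var: "\<And>i. (\<integral>x. (e i x)\<^sup>2 \<partial>M) = s2"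
    and uncorr: "\<And>i j. i \<noteq> j \<Longrightarrow> (\<integral>x. e i x * e j x \<partial>M) = 0"
  shows "(\<integral>x. (\<Sum>m<N. c m * e m x)\<^sup>2 \<partial>M) = s2 * (\<Sum>m<N. (c m)\<^sup>2)"
proof -
  have cov: "(\<integral>x. e i x * e j x \<partial>M) = (if i = j then s2 else 0)" for i j
    using var[of i] uncorr[of i j] by (cases "i = j") (simp_all add: power2_eq_square)
  have "(\<lambda>x. (\<Sum>m<N. c m * e m x)\<^sup>2) = (\<lambda>x. \<Sum>m<N. \<Sum>m'<N. (c m * c m') * (e m x * e m' x))"
    by (simp add: power2_eq_square sum_product algebra_simps)
  then have "(\<integral>x. (\<Sum>m<N. c m * e m x)\<^sup>2 \<partial>M) = (\<Sum>m<N. \<Sum>m'<N. (c m * c m') * (\<integral>x. e m x * e m' x \<partial>M))"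
    using square_integrable_mult_integrable[OF e e] by (simp add: integral_sum)
  also have "\<dots> = (\<Sum>m<N. (c m)\<^sup>2 * s2)"
    by (simp add: cov power2_eq_square if_distrib sum.delta cong: if_cong)
  finally show ?thesis by (simp add: sum_distrib_left mult.commute)
qed

lemma mean_square_limit_finite_combination:
  fixes F :: "nat \<Rightarrow> 'i \<Rightarrow> 'a \<Rightarrow> real" and G :: "'i \<Rightarrow> 'a \<Rightarrow> real"
  assumes J: "finite J"
    and F: "\<And>N j. square_integrable M (F N j)" and G: "\<And>j. square_integrable M (G j)"
    and lim: "\<And>j. j \<in> J \<Longrightarrow> (\<lambda>N. \<integral>x. (F N j x - G j x)\<^sup>2 \<partial>M) \<longlonglongrightarrow> 0"
  shows "(\<lambda>N. \<integral>x. ((\<Sum>j\<in>J. c j * F N j x) - (\<Sum>j\<in>J. c j * G j x))\<^sup>2 \<partial>M) \<longlonglongrightarrow> 0"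
proof (rule Lim_null_comparison)
  let ?bound = "\<lambda>N. real (card J) * (\<Sum>j\<in>J. (c j)\<^sup>2 * (\<integral>x. (F N j x - G j x)\<^sup>2 \<partial>M))"
  have "?bound \<longlonglongrightarrow> real (card J) * (\<Sum>j\<in>J. (c j)\<^sup>2 * 0)"
    using lim by (intro tendsto_intros) auto
  then show "?bound \<longlonglongrightarrow> 0" by simp
  show "\<forall>\<^sub>F N in sequentially. norm (\<integral>x. ((\<Sum>j\<in>J. c j * F N j x) - (\<Sum>j\<in>J. c j * G j x))\<^sup>2 \<partial>M) \<le> ?bound N"
  proof (intro always_eventually allI)
    fix N
    have diff: "integrable M (\<lambda>x. (F N j x - G j x)\<^sup>2)" for j
      using square_integrable_diff[OF F G] unfolding square_integrable_def by auto
    have pointwise: "((\<Sum>j\<in>J. c j * F N j x) - (\<Sum>j\<in>J. c j * G j x))\<^sup>2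
        \<le> real (card J) * (\<Sum>j\<in>J. (c j)\<^sup>2 * (F N j x - G j x)\<^sup>2)" for x
    proof -
      have "(\<Sum>j\<in>J. c j * F N j x) - (\<Sum>j\<in>J. c j * G j x) = (\<Sum>j\<in>J. c j * (F N j x - G j x))"
        by (simp add: sum_subtractf right_diff_distrib)
      then show ?thesis
        using sum_squared_le_sum_of_squares[of "\<lambda>j. c j * (F N j x - G j x)" J]
        by (simp add: power_mult_distrib mult.commute)
    qed
    have "(\<integral>x. ((\<Sum>j\<in>J. c j * F N j x) - (\<Sum>j\<in>J. c j * G j x))\<^sup>2 \<partial>M)
        \<le> (\<integral>x. real (card J) * (\<Sum>j\<in>J. (c j)\<^sup>2 * (F N j x - G j x)\<^sup>2) \<partial>M)"
      using diff pointwise by (intro integral_mono') (auto intro: order_trans[OF zero_le_power2])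
    also have "\<dots> = ?bound N" using diff by (simp add: integral_sum)
    finally show "norm (\<integral>x. ((\<Sum>j\<in>J. c j * F N j x) - (\<Sum>j\<in>J. c j * G j x))\<^sup>2 \<partial>M) \<le> ?bound N"
      by simp
  qed
qed

subsection \<open>The mean-square error of the truncated predictor\<close>

lemma sum_upto_diff_as_shift:
  fixes N j :: nat
  shows "(\<Sum>i<N - j. g i) = (\<Sum>m<N. if j \<le> m then g (m - j) else (0::real))"
proof (induction N)
  case (Suc N)
  then show ?case by (cases "j \<le> N") (simp_all add: Suc_diff_le)
qed simp

text \<open>Substituting the truncated MA expansions of X_{k+1-j} into the error
  of the truncated predictor and collecting terms by innovation.\<close>
lemma truncated_error_expansion:
  fixes a b :: "nat \<Rightarrow> real" and e :: "int \<Rightarrow> real"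
  shows "(\<Sum>j\<le>k. a j * (\<Sum>i<N - j. b i * e (int k + 1 - int j - int i)))
         = (\<Sum>m<N. err_coeff a b k m * e (int k + 1 - int m))"
proof -
  have "a j * (\<Sum>i<N - j. b i * e (int k + 1 - int j - int i))
        = (\<Sum>m<N. (if j \<le> m then a j * b (m - j) else 0) * e (int k + 1 - int m))" for j
  proof -
    have shift: "(\<Sum>i<N - j. b i * e (int k + 1 - int j - int i))
          = (\<Sum>m<N. if j \<le> m then b (m - j) * e (int k + 1 - int m) else 0)"
      unfolding sum_upto_diff_as_shift by (intro sum.cong refl) (auto simp: of_nat_diff algebra_simps)
    show ?thesis unfolding shift sum_distrib_left by (intro sum.cong refl) simp
  qed
  then have "(\<Sum>j\<le>k. a j * (\<Sum>i<N - j. b i * e (int k + 1 - int j - int i)))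
             = (\<Sum>j\<le>k. \<Sum>m<N. (if j \<le> m then a j * b (m - j) else 0) * e (int k + 1 - int m))"
    by simp
  also have "\<dots> = (\<Sum>m<N. err_coeff a b k m * e (int k + 1 - int m))"
    unfolding err_coeff_def by (subst sum.swap) (simp add: sum_distrib_right)
  finally show ?thesis .
qed

lemma prediction_error_limit:
  fixes M :: "'w measure" and X eps :: "int \<Rightarrow> 'w \<Rightarrow> real" and a b :: "nat \<Rightarrow> real"
  assumes X: "\<And>n. square_integrable M (X n)" and eps: "\<And>n. square_integrable M (eps n)"
    and eps_var: "\<And>n. (\<integral>\<omega>. (eps n \<omega>)\<^sup>2 \<partial>M) = s2"
    and eps_uncorr: "\<And>n m. n \<noteq> m \<Longrightarrow> (\<integral>\<omega>. eps n \<omega> * eps m \<omega> \<partial>M) = 0"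
    and X_MA: "\<And>n. (\<lambda>N. \<integral>\<omega>. (X n \<omega> - (\<Sum>j<N. b j * eps (n - int j) \<omega>))\<^sup>2 \<partial>M) \<longlonglongrightarrow> 0"
  shows "(\<lambda>N. s2 * (\<Sum>m<N. (err_coeff a b k m)\<^sup>2))
           \<longlonglongrightarrow> (\<integral>\<omega>. (\<Sum>j\<le>k. a j * X (int k + 1 - int j) \<omega>)\<^sup>2 \<partial>M)"
proof -
  define S where "S N j \<omega> = (\<Sum>i<N - j. b i * eps (int k + 1 - int j - int i) \<omega>)" for N j \<omega>
  have S: "square_integrable M (S N j)" for N j
    unfolding S_def by (intro square_integrable_sum square_integrable_cmult eps) auto
  have S_lim: "(\<lambda>N. \<integral>\<omega>. (S N j \<omega> - X (int k + 1 - int j) \<omega>)\<^sup>2 \<partial>M) \<longlonglongrightarrow> 0" for j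
  proof (rule LIMSEQ_offset[where k = j])
    show "(\<lambda>N. \<integral>\<omega>. (S (N + j) j \<omega> - X (int k + 1 - int j) \<omega>)\<^sup>2 \<partial>M) \<longlonglongrightarrow> 0"
      using X_MA[of "int k + 1 - int j"] by (simp add: S_def power2_commute)
  qed
  have "(\<lambda>N. \<integral>\<omega>. ((\<Sum>j\<le>k. a j * S N j \<omega>) - (\<Sum>j\<le>k. a j * X (int k + 1 - int j) \<omega>))\<^sup>2 \<partial>M)
        \<longlonglongrightarrow> 0"
    by (rule mean_square_limit_finite_combination[OF _ S X S_lim]) simp
  then have "(\<lambda>N. \<integral>\<omega>. (\<Sum>j\<le>k. a j * S N j \<omega>)\<^sup>2 \<partial>M)
             \<longlonglongrightarrow> (\<integral>\<omega>. (\<Sum>j\<le>k. a j * X (int k + 1 - int j) \<omega>)\<^sup>2 \<partial>M)"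
    by (intro mean_square_limit_imp_second_moment_limit square_integrable_sum square_integrable_cmult S X)
      auto
  moreover have "(\<integral>\<omega>. (\<Sum>j\<le>k. a j * S N j \<omega>)\<^sup>2 \<partial>M) = s2 * (\<Sum>m<N. (err_coeff a b k m)\<^sup>2)" for N
  proof -
    have "(\<integral>\<omega>. (\<Sum>j\<le>k. a j * S N j \<omega>)\<^sup>2 \<partial>M)
          = (\<integral>\<omega>. (\<Sum>m<N. err_coeff a b k m * eps (int k + 1 - int m) \<omega>)\<^sup>2 \<partial>M)"
    proof -
      have "(\<Sum>j\<le>k. a j * S N j \<omega>) = (\<Sum>m<N. err_coeff a b k m * eps (int k + 1 - int m) \<omega>)" for \<omega>
        unfolding S_def by (rule truncated_error_expansion[where e = "\<lambda>n. eps n \<omega>"])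
      then show ?thesis by simp
    qed
    also have "\<dots> = s2 * (\<Sum>m<N. (err_coeff a b k m)\<^sup>2)"
      by (rule integral_square_orthogonal_sum) (auto intro: eps eps_var eps_uncorr)
    finally show ?thesis .
  qed
  ultimately show ?thesis by simp
qed

text \<open>The innovation eps_{k+1} contributes exactly s2; all remaining
  contributions come from the tail coefficients with index m > k.\<close>
lemma prediction_error_bounds:
  fixes a b :: "nat \<Rightarrow> real"
  assumes lim: "(\<lambda>N. s2 * (\<Sum>m<N. (err_coeff a b k m)\<^sup>2)) \<longlonglongrightarrow> E"
    and conv: "\<And>m. (\<Sum>i\<le>m. a i * b (m - i)) = (if m = 0 then 1 else 0)"
    and s2: "s2 \<ge> 0"
    and tail: "\<And>N. (\<Sum>m\<in>{k<..<N}. (err_coeff a b k m)\<^sup>2) \<le> T"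
  shows "s2 \<le> E" and "E \<le> s2 * (1 + T)"
proof -
  have sq_split: "(err_coeff a b k m)\<^sup>2 = (if m = 0 then 1 else 0) + (if k < m then (err_coeff a b k m)\<^sup>2 else 0)"
    for m by (cases "m \<le> k") (auto simp: err_coeff_low[OF conv])
  then have split: "(\<Sum>m<N. (err_coeff a b k m)\<^sup>2)
      = (if 0 < N then 1 else 0) + (\<Sum>m\<in>{k<..<N}. (err_coeff a b k m)\<^sup>2)" for N
  proof -
    have "(\<Sum>m<N. (err_coeff a b k m)\<^sup>2)
        = (\<Sum>m<N. (if m = 0 then 1 else 0)) + (\<Sum>m<N. if k < m then (err_coeff a b k m)\<^sup>2 else 0)"
      unfolding sum.distrib[symmetric] by (rule sum.cong[OF refl sq_split])
    also have "(\<Sum>m<N. if k < m then (err_coeff a b k m)\<^sup>2 else 0)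
        = (\<Sum>m\<in>{m\<in>{..<N}. k < m}. (err_coeff a b k m)\<^sup>2)"
      by (rule sum.inter_filter[symmetric]) simp
    also have "{m\<in>{..<N}. k < m} = {k<..<N}" by auto
    finally show ?thesis by (simp add: sum.delta)
  qed
  show "s2 \<le> E"
  proof (rule LIMSEQ_le_const[OF lim], intro exI allI impI)
    fix N :: nat assume "N \<ge> 1"
    then have "1 \<le> (\<Sum>m<N. (err_coeff a b k m)\<^sup>2)" unfolding split by (simp add: sum_nonneg)
    then show "s2 \<le> s2 * (\<Sum>m<N. (err_coeff a b k m)\<^sup>2)" using s2 by (simp add: mult_le_cancel_left1)
  qed
  show "E \<le> s2 * (1 + T)"
  proof (rule LIMSEQ_le_const2[OF lim], intro exI allI impI)
    fix N :: nat
    have "(\<Sum>m<N. (err_coeff a b k m)\<^sup>2) \<le> 1 + T" unfolding split using tail[of N] tail[of 0] by simp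
    then show "s2 * (\<Sum>m<N. (err_coeff a b k m)\<^sup>2) \<le> s2 * (1 + T)" using s2 by (rule mult_left_mono)
  qed
qed

lemma WK_trunc_pred_error:
  assumes "a 0 = 1"
  shows "X (int k + 1) \<omega> - WK_trunc_pred a X k \<omega> = (\<Sum>j\<le>k. a j * X (int k + 1 - int j) \<omega>)"
proof -
  have "{..k} = insert 0 {1..k}" by auto
  then show ?thesis unfolding WK_trunc_pred_def using assms by simp
qed

lemma prediction_excess_le:
  fixes M :: "'w measure" and X eps :: "int \<Rightarrow> 'w \<Rightarrow> real" and a b :: "nat \<Rightarrow> real"
  assumes X: "\<And>n. square_integrable M (X n)" and eps: "\<And>n. square_integrable M (eps n)"
    and eps_var: "\<And>n. (\<integral>\<omega>. (eps n \<omega>)\<^sup>2 \<partial>M) = s2" and s2: "s2 \<ge> 0"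
    and eps_uncorr: "\<And>n m. n \<noteq> m \<Longrightarrow> (\<integral>\<omega>. eps n \<omega> * eps m \<omega> \<partial>M) = 0"
    and X_MA: "\<And>n. (\<lambda>N. \<integral>\<omega>. (X n \<omega> - (\<Sum>j<N. b j * eps (n - int j) \<omega>))\<^sup>2 \<partial>M) \<longlonglongrightarrow> 0"
    and a0: "a 0 = 1"
    and conv: "\<And>m. (\<Sum>i\<le>m. a i * b (m - i)) = (if m = 0 then 1 else 0)"
    and tail: "\<And>N. (\<Sum>m\<in>{k<..<N}. (err_coeff a b k m)\<^sup>2) \<le> T"
  shows "\<bar>(\<integral>\<omega>. (X (int k + 1) \<omega> - WK_trunc_pred a X k \<omega>)\<^sup>2 \<partial>M) - s2\<bar> \<le> s2 * T"
proof -
  have lim: "(\<lambda>N. s2 * (\<Sum>m<N. (err_coeff a b k m)\<^sup>2))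
      \<longlonglongrightarrow> (\<integral>\<omega>. (X (int k + 1) \<omega> - WK_trunc_pred a X k \<omega>)\<^sup>2 \<partial>M)"
    unfolding WK_trunc_pred_error[where a = a, OF a0]
    by (rule prediction_error_limit[OF X eps eps_var eps_uncorr X_MA])
  show ?thesis
    using prediction_error_bounds[OF lim conv s2 tail] by (simp add: algebra_simps)
qed

theorem proposition1:
  fixes M :: "'w measure"
    and X eps :: "int \<Rightarrow> 'w \<Rightarrow> real"
    and \<sigma> :: "int \<Rightarrow> real"
    and a b :: "nat \<Rightarrow> real"
    and s2 d :: real
  assumes prob: "prob_space M"
    \<comment> \<open>X is real, zero-mean, weakly stationary, in L^2, with autocovariance sigma\<close>
    and X_meas: "\<And>n. X n \<in> borel_measurable M"
    and X_L2: "\<And>n. integrable M (\<lambda>\<omega>. (X n \<omega>)\<^sup>2)"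
    and X_mean: "\<And>n. (\<integral>\<omega>. X n \<omega> \<partial>M) = 0"
    and X_cov: "\<And>n j. (\<integral>\<omega>. X n \<omega> * X (n + j) \<omega> \<partial>M) = \<sigma> j"
    and \<sigma>_not_abs_summable: "\<not> ((\<lambda>j. \<bar>\<sigma> j\<bar>) summable_on (UNIV :: int set))"
    \<comment> \<open>innovations: uncorrelated, mean 0, variance s2 > 0\<close>
    and eps_meas: "\<And>n. eps n \<in> borel_measurable M"
    and eps_L2: "\<And>n. integrable M (\<lambda>\<omega>. (eps n \<omega>)\<^sup>2)"
    and eps_mean: "\<And>n. (\<integral>\<omega>. eps n \<omega> \<partial>M) = 0"
    and eps_var: "\<And>n. (\<integral>\<omega>. (eps n \<omega>)\<^sup>2 \<partial>M) = s2"
    and eps_uncorr: "\<And>n m. n \<noteq> m \<Longrightarrow> (\<integral>\<omega>. eps n \<omega> * eps m \<omega> \<partial>M) = 0"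
    and s2_pos: "s2 > 0"
    \<comment> \<open>MA(infinity) representation, convergent in L^2\<close>
    and b0: "b 0 = 1"
    and b_sq: "summable (\<lambda>j. (b j)\<^sup>2)"
    and X_MA: "\<And>n. (\<lambda>N. \<integral>\<omega>. (X n \<omega> - (\<Sum>j<N. b j * eps (n - int j) \<omega>))\<^sup>2 \<partial>M) \<longlonglongrightarrow> 0"
    \<comment> \<open>AR(infinity) representation, convergent in L^2\<close>
    and a0: "a 0 = 1"
    and a_abs: "summable (\<lambda>j. \<bar>a j\<bar>)"
    and eps_AR: "\<And>n. (\<lambda>N. \<integral>\<omega>. (eps n \<omega> - (\<Sum>j<N. a j * X (n - int j) \<omega>))\<^sup>2 \<partial>M) \<longlonglongrightarrow> 0"
    \<comment> \<open>A(z) B(z) = 1 on the closed unit disc (wherever the series B(z) converges)\<close>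
    and AB: "\<And>z::complex. norm z \<le> 1 \<Longrightarrow> summable (\<lambda>j. complex_of_real (b j) * z ^ j) \<Longrightarrow>
               (\<Sum>j. complex_of_real (a j) * z ^ j) * (\<Sum>j. complex_of_real (b j) * z ^ j) = 1"
    \<comment> \<open>long memory parameter and power-law bounds on the coefficients\<close>
    and d_pos: "0 < d" and d_lt: "d < 1/2"
    and coeff_bounds: "\<And>\<delta>. \<delta> > 0 \<Longrightarrow> \<exists>C1 C2. \<forall>j\<ge>1.
               \<bar>a j\<bar> \<le> C1 * real j powr (- d - 1 + \<delta>) \<and> \<bar>b j\<bar> \<le> C2 * real j powr (d - 1 + \<delta>)"
  shows "\<forall>\<delta>>0. (\<lambda>k::nat. (\<integral>\<omega>. (X (int k + 1) \<omega> - WK_trunc_pred a X k \<omega>)\<^sup>2 \<partial>M) - s2)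
            \<in> O(\<lambda>k. real k powr (-1 + \<delta>))"
proof (intro allI impI)
  fix \<delta> :: real assume \<delta>: "\<delta> > 0"
  have conv: "\<And>m. (\<Sum>i\<le>m. a i * b (m - i)) = (if m = 0 then 1 else 0)"
    by (rule convolution_of_reciprocal_series[OF b_sq a_abs AB])
  obtain K where tail: "\<And>k N. k \<ge> 1 \<Longrightarrow>
      (\<Sum>m\<in>{k<..<N}. (err_coeff a b k m)\<^sup>2) \<le> K * real k powr (-1 + \<delta>)"
    using err_coeff_tail_energy_rate[OF conv b0 d_pos d_lt coeff_bounds \<delta>] by blast
  have X: "\<And>n. square_integrable M (X n)" and eps: "\<And>n. square_integrable M (eps n)"
    using X_meas X_L2 eps_meas eps_L2 by (auto simp: square_integrable_def)
  have "eventually (\<lambda>k. norm ((\<integral>\<omega>. (X (int k + 1) \<omega> - WK_trunc_pred a X k \<omega>)\<^sup>2 \<partial>M) - s2)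
      \<le> s2 * K * norm (real k powr (-1 + \<delta>))) at_top"
  proof (rule eventually_at_top_linorder[THEN iffD2], intro exI allI impI)
    fix k :: nat assume "k \<ge> 1"
    from prediction_excess_le[OF X eps eps_var _ eps_uncorr X_MA a0 conv tail[OF this]] s2_pos
    show "norm ((\<integral>\<omega>. (X (int k + 1) \<omega> - WK_trunc_pred a X k \<omega>)\<^sup>2 \<partial>M) - s2)
        \<le> s2 * K * norm (real k powr (-1 + \<delta>))" by (simp add: mult.assoc)
  qed
  then show "(\<lambda>k. (\<integral>\<omega>. (X (int k + 1) \<omega> - WK_trunc_pred a X k \<omega>)\<^sup>2 \<partial>M) - s2)
      \<in> O(\<lambda>k. real k powr (-1 + \<delta>))" by (rule bigoI)
qed

end
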